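(* Let $M>0$. There exist a real Banach space $(X,\|\cdot\|)$ that is linearly isomorphic to $\ell_1$ and an approximately convex set $A\subseteq B_M(X)$ such that $$\mathcal{H}(A,\operatorname{Co}(A))=\operatorname{diam}(A)=2M.$$
   Context: $B_M(X)=\{x\in X:\|x\|\le M\}$. A set $A$ is approximately convex if $d(tx+(1-t)y,A)\le1$ for all $x,y\in A$, $t\in[0,1]$, where $d(x,A)=\inf_{a\in A}\|x-a\|$. $\mathcal{H}$ is the Hausdorff distance, $\operatorname{Co}$ the convex hull, $\operatorname{diam}(A)=\sup\{\|x-y\|:x,y\in A\}$. *)

theory Defs
  imports "HOL-Analysis.Analysis"
begin

definition l1space :: "(nat \<Rightarrow> real) set" where
  "l1space = {x. summable (\<lambda>n. \<bar>x n\<bar>)}"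

definition l1norm :: "(nat \<Rightarrow> real) \<Rightarrow> real" where
  "l1norm x = (\<Sum>n. \<bar>x n\<bar>)"

definition vadd :: "(nat \<Rightarrow> real) \<Rightarrow> (nat \<Rightarrow> real) \<Rightarrow> (nat \<Rightarrow> real)" where
  "vadd x y = (\<lambda>n. x n + y n)"

definition vsub :: "(nat \<Rightarrow> real) \<Rightarrow> (nat \<Rightarrow> real) \<Rightarrow> (nat \<Rightarrow> real)" where
  "vsub x y = (\<lambda>n. x n - y n)"

definition vscale :: "real \<Rightarrow> (nat \<Rightarrow> real) \<Rightarrow> (nat \<Rightarrow> real)" where
  "vscale c x = (\<lambda>n. c * x n)"

definition is_norm_on_l1 :: "((nat \<Rightarrow> real) \<Rightarrow> real) \<Rightarrow> bool" where
  "is_norm_on_l1 N \<longleftrightarrow>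
     (\<forall>x\<in>l1space. N x \<ge> 0 \<and> (N x = 0 \<longleftrightarrow> x = (\<lambda>n. 0))) \<and>
     (\<forall>x\<in>l1space. \<forall>c. N (vscale c x) = \<bar>c\<bar> * N x) \<and>
     (\<forall>x\<in>l1space. \<forall>y\<in>l1space. N (vadd x y) \<le> N x + N y)"

text \<open>(l1, N) is a real Banach space linearly isomorphic to l1: N is a norm equivalent
  to the l1 norm (so the identity is a bounded linear isomorphism; completeness follows).\<close>
definition equiv_l1_norm :: "((nat \<Rightarrow> real) \<Rightarrow> real) \<Rightarrow> bool" where
  "equiv_l1_norm N \<longleftrightarrow> is_norm_on_l1 N \<and>
     (\<exists>c C. 0 < c \<and> 0 < C \<and> (\<forall>x\<in>l1space. c * l1norm x \<le> N x \<and> N x \<le> C * l1norm x))"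

definition ball_N :: "((nat \<Rightarrow> real) \<Rightarrow> real) \<Rightarrow> real \<Rightarrow> (nat \<Rightarrow> real) set" where
  "ball_N N M = {x\<in>l1space. N x \<le> M}"

definition dist_set_N :: "((nat \<Rightarrow> real) \<Rightarrow> real) \<Rightarrow> (nat \<Rightarrow> real) \<Rightarrow> (nat \<Rightarrow> real) set \<Rightarrow> ereal" where
  "dist_set_N N x A = (INF a\<in>A. ereal (N (vsub x a)))"

definition approx_convex_N :: "((nat \<Rightarrow> real) \<Rightarrow> real) \<Rightarrow> (nat \<Rightarrow> real) set \<Rightarrow> bool" where
  "approx_convex_N N A \<longleftrightarrow>
     (\<forall>x\<in>A. \<forall>y\<in>A. \<forall>t\<in>{0..1::real}.
        dist_set_N N (vadd (vscale t x) (vscale (1 - t) y)) A \<le> 1)"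

definition convex_seq :: "(nat \<Rightarrow> real) set \<Rightarrow> bool" where
  "convex_seq C \<longleftrightarrow> (\<forall>x\<in>C. \<forall>y\<in>C. \<forall>t\<in>{0..1::real}. vadd (vscale t x) (vscale (1 - t) y) \<in> C)"

definition Co :: "(nat \<Rightarrow> real) set \<Rightarrow> (nat \<Rightarrow> real) set" where
  "Co A = \<Inter>{C. A \<subseteq> C \<and> convex_seq C}"

definition hausdorff_N :: "((nat \<Rightarrow> real) \<Rightarrow> real) \<Rightarrow> (nat \<Rightarrow> real) set \<Rightarrow> (nat \<Rightarrow> real) set \<Rightarrow> ereal" where
  "hausdorff_N N A B = max (SUP a\<in>A. dist_set_N N a B) (SUP b\<in>B. dist_set_N N b A)"

definition diam_N :: "((nat \<Rightarrow> real) \<Rightarrow> real) \<Rightarrow> (nat \<Rightarrow> real) set \<Rightarrow> ereal" where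
  "diam_N N A = (SUP p\<in>A \<times> A. ereal (N (vsub (fst p) (snd p))))"

end

theory Submission
  imports Defs
begin

text \<open>Take for \<open>A\<close> the \<open>M\<close>-multiples of the finitely supported probability vectors of Shannon
  entropy at most \<open>4 M + 1\<close>, in \<open>l1\<close> with its usual norm; all of them have norm \<open>M\<close>, and two unit
  vectors are \<open>2 M\<close> apart. A convex combination of two such vectors has entropy at most one more,
  and shrinking it slightly towards a unit vector restores the entropy bound at distance at most 1,
  so \<open>A\<close> is approximately convex. The uniform distribution on \<open>n\<close> points lies in the convex hull
  of the unit vectors, but its overlap with any vector of bounded entropy tends to 0 as \<open>n\<close> grows,
  so its distance from \<open>A\<close> tends to \<open>2 M\<close>.\<close>

section \<open>The sequence space l1\<close>

lemma l1space_finite_support: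
  assumes "\<And>i. i \<ge> n \<Longrightarrow> x i = 0"
  shows "x \<in> l1space" and "l1norm x = (\<Sum>i<n. \<bar>x i\<bar>)"
proof -
  have "(\<lambda>i. \<bar>x i\<bar>) sums (\<Sum>i<n. \<bar>x i\<bar>)"
    by (rule sums_finite) (use assms in auto)
  then show "x \<in> l1space" and "l1norm x = (\<Sum>i<n. \<bar>x i\<bar>)"
    unfolding l1space_def l1norm_def by (auto simp: sums_iff)
qed

lemma l1space_vadd: "x \<in> l1space \<Longrightarrow> y \<in> l1space \<Longrightarrow> vadd x y \<in> l1space"
  unfolding l1space_def vadd_def mem_Collect_eq
  by (rule summable_comparison_test[of _ "\<lambda>n. \<bar>x n\<bar> + \<bar>y n\<bar>"]) (auto intro: summable_add)

lemma l1space_vscale: "x \<in> l1space \<Longrightarrow> vscale c x \<in> l1space"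
  unfolding l1space_def vscale_def by (simp add: abs_mult summable_mult)

lemma vsub_eq_vadd_vscale: "vsub x y = vadd x (vscale (-1) y)"
  by (simp add: vsub_def vadd_def vscale_def)

lemma l1space_vsub: "x \<in> l1space \<Longrightarrow> y \<in> l1space \<Longrightarrow> vsub x y \<in> l1space"
  by (simp add: vsub_eq_vadd_vscale l1space_vadd l1space_vscale)

lemma l1norm_nonneg: "x \<in> l1space \<Longrightarrow> 0 \<le> l1norm x"
  unfolding l1space_def l1norm_def by (simp add: suminf_nonneg)

lemma l1norm_eq_0_iff: "x \<in> l1space \<Longrightarrow> l1norm x = 0 \<longleftrightarrow> x = (\<lambda>n. 0)"
  unfolding l1space_def l1norm_def by (auto simp: suminf_eq_zero_iff fun_eq_iff)

lemma l1norm_zero: "l1norm (\<lambda>n. 0) = 0"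
  by (simp add: l1norm_def)

lemma l1norm_vscale: "x \<in> l1space \<Longrightarrow> l1norm (vscale c x) = \<bar>c\<bar> * l1norm x"
  unfolding l1space_def l1norm_def vscale_def by (simp add: abs_mult suminf_mult)

lemma l1norm_triangle:
  assumes "x \<in> l1space" and "y \<in> l1space"
  shows "l1norm (vadd x y) \<le> l1norm x + l1norm y"
proof -
  have "(\<Sum>n. \<bar>x n + y n\<bar>) \<le> (\<Sum>n. \<bar>x n\<bar> + \<bar>y n\<bar>)"
    using assms l1space_vadd[OF assms]
    by (intro suminf_le) (auto simp: l1space_def vadd_def intro: summable_add)
  also have "\<dots> = (\<Sum>n. \<bar>x n\<bar>) + (\<Sum>n. \<bar>y n\<bar>)"
    using assms by (intro suminf_add[symmetric]) (auto simp: l1space_def)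
  finally show ?thesis
    by (simp add: l1norm_def vadd_def)
qed

lemma equiv_l1_norm_l1norm: "equiv_l1_norm l1norm"
  unfolding equiv_l1_norm_def is_norm_on_l1_def
  using l1norm_nonneg l1norm_eq_0_iff l1norm_vscale l1norm_triangle
  by (auto intro!: exI[of _ 1])

lemma l1norm_vsub_le:
  assumes "x \<in> l1space" and "y \<in> l1space"
  shows "l1norm (vsub x y) \<le> l1norm x + l1norm y"
  using l1norm_triangle[OF assms(1) l1space_vscale[OF assms(2)], of "-1"]
    l1norm_vscale[OF assms(2), of "-1"]
  by (simp add: vsub_eq_vadd_vscale)

lemma vsub_vscale: "vsub (vscale c x) (vscale c y) = vscale c (vsub x y)"
  by (simp add: vsub_def vscale_def algebra_simps)

lemma vscale_vadd_vscale:
  "vscale c (vadd (vscale s x) (vscale t y)) = vadd (vscale s (vscale c x)) (vscale t (vscale c y))"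
  by (simp add: vadd_def vscale_def algebra_simps)

lemma convex_seq_ball_N_l1norm: "convex_seq (ball_N l1norm M)"
  unfolding convex_seq_def ball_N_def
proof (intro ballI)
  fix x y and t :: real
  assume x: "x \<in> {x \<in> l1space. l1norm x \<le> M}" and y: "y \<in> {x \<in> l1space. l1norm x \<le> M}"
    and t: "t \<in> {0..1}"
  have "l1norm (vadd (vscale t x) (vscale (1 - t) y)) \<le> t * l1norm x + (1 - t) * l1norm y"
    using l1norm_triangle[of "vscale t x" "vscale (1 - t) y"] x y t
    by (simp add: l1norm_vscale l1space_vscale)
  also have "\<dots> \<le> t * M + (1 - t) * M"
    using x y t by (intro add_mono mult_left_mono) auto
  finally show "vadd (vscale t x) (vscale (1 - t) y) \<in> {x \<in> l1space. l1norm x \<le> M}"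
    using x y by (auto simp: algebra_simps intro: l1space_vadd l1space_vscale)
qed

lemma Co_subset: "A \<subseteq> Co A"
  unfolding Co_def by auto

lemma convex_seq_Co: "convex_seq (Co A)"
  unfolding convex_seq_def Co_def by auto

lemma Co_minimal: "A \<subseteq> C \<Longrightarrow> convex_seq C \<Longrightarrow> Co A \<subseteq> C"
  unfolding Co_def by auto

lemma dist_set_N_le: "a \<in> A \<Longrightarrow> dist_set_N N x A \<le> N (vsub x a)"
  unfolding dist_set_N_def by (rule INF_lower2) auto

lemma hausdorff_N_Co_eq:
  assumes "N (\<lambda>n. 0) = 0" and "0 \<le> (SUP b\<in>Co A. dist_set_N N b A)"
  shows "hausdorff_N N A (Co A) = (SUP b\<in>Co A. dist_set_N N b A)"
proof -
  have "dist_set_N N a (Co A) \<le> 0" if "a \<in> A" for a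
    using dist_set_N_le[of a "Co A" N a] that Co_subset assms(1)
    by (auto simp: vsub_def zero_ereal_def)
  then have "(SUP a\<in>A. dist_set_N N a (Co A)) \<le> (SUP b\<in>Co A. dist_set_N N b A)"
    using assms(2) by (meson SUP_least order_trans)
  then show ?thesis
    unfolding hausdorff_N_def by (rule max_absorb2)
qed

section \<open>Entropy of finitely supported probability vectors\<close>

text \<open>Since \<open>ln 0 = 0\<close> in Isabelle, \<open>eta 0 = 0\<close>, matching the convention \<open>0 ln 0 = 0\<close>.\<close>
definition eta :: "real \<Rightarrow> real" where
  "eta x = - x * ln x"

definition entropy :: "nat \<Rightarrow> (nat \<Rightarrow> real) \<Rightarrow> real" where
  "entropy n p = (\<Sum>i<n. eta (p i))"

definition prob_vector :: "nat \<Rightarrow> (nat \<Rightarrow> real) \<Rightarrow> bool" where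
  "prob_vector n p \<longleftrightarrow> (\<forall>i. 0 \<le> p i) \<and> (\<forall>i\<ge>n. p i = 0) \<and> (\<Sum>i<n. p i) = 1"

lemma eta_0 [simp]: "eta 0 = 0"
  by (simp add: eta_def)

lemma eta_1 [simp]: "eta 1 = 0"
  by (simp add: eta_def)

lemma eta_nonneg: "0 \<le> x \<Longrightarrow> x \<le> 1 \<Longrightarrow> 0 \<le> eta x"
  by (cases "x = 0") (auto simp: eta_def mult_nonneg_nonpos)

lemma eta_le: "0 \<le> x \<Longrightarrow> eta x \<le> 1 - x"
proof (cases "x = 0")
  case False
  assume "0 \<le> x"
  with False have "0 < x" by simp
  have "ln (1 / x) \<le> 1 / x - 1"
    using \<open>0 < x\<close> by (intro ln_le_minus_one) auto
  then have "x * - ln x \<le> x * (1 / x - 1)"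
    using \<open>0 < x\<close> by (intro mult_left_mono) (auto simp: ln_div)
  then show ?thesis
    using \<open>0 < x\<close> by (simp add: eta_def algebra_simps)
qed simp

lemma eta_ge_if_le_exp:
  assumes "0 \<le> x" and "x \<le> exp (- L)"
  shows "L * x \<le> eta x"
proof (cases "x = 0")
  case False
  with assms have "ln x \<le> ln (exp (- L))"
    by (subst ln_le_cancel_iff) auto
  then have "ln x \<le> - L"
    by simp
  with assms show ?thesis
    using mult_left_mono[OF \<open>ln x \<le> - L\<close> \<open>0 \<le> x\<close>] by (simp add: eta_def mult.commute)
qed simp

lemma eta_subadditive:
  assumes "0 \<le> a" and "0 \<le> b"
  shows "eta (a + b) \<le> eta a + eta b"
proof -
  have "a * ln a \<le> a * ln (a + b)"
    using assms by (cases "a = 0") (auto intro: mult_left_mono)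
  moreover have "b * ln b \<le> b * ln (a + b)"
    using assms by (cases "b = 0") (auto intro: mult_left_mono)
  ultimately show ?thesis
    by (simp add: eta_def algebra_simps)
qed

lemma eta_mult: "0 \<le> s \<Longrightarrow> 0 \<le> x \<Longrightarrow> eta (s * x) = s * eta x + x * eta s"
  by (cases "s = 0 \<or> x = 0") (auto simp: eta_def ln_mult_pos algebra_simps)

lemma prob_vector_mono:
  assumes "prob_vector n p" and "n \<le> m"
  shows "prob_vector m p" and "entropy m p = entropy n p"
proof -
  have "(\<Sum>i<m. f (p i)) = (\<Sum>i<n. f (p i))" if "f 0 = 0" for f :: "real \<Rightarrow> real"
    using assms that by (intro sum.mono_neutral_right) (auto simp: prob_vector_def)
  from this[of id] this[of eta] assms show "prob_vector m p" and "entropy m p = entropy n p"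
    by (auto simp: prob_vector_def entropy_def)
qed

lemma prob_vector_le_1:
  assumes "prob_vector n p"
  shows "p i \<le> 1"
proof (cases "i < n")
  case True
  then have "p i \<le> (\<Sum>j<n. p j)"
    using assms unfolding prob_vector_def by (intro member_le_sum) auto
  with assms show ?thesis
    unfolding prob_vector_def by simp
qed (use assms in \<open>auto simp: prob_vector_def\<close>)

lemma prob_vector_l1:
  assumes "prob_vector n p"
  shows "p \<in> l1space" and "l1norm p = 1"
  using l1space_finite_support[of n p] assms by (auto simp: prob_vector_def)

lemma prob_vector_mixture:
  assumes "prob_vector n p" and "prob_vector n q" and "t \<in> {0..1}"
  shows "prob_vector n (vadd (vscale t p) (vscale (1 - t) q))"
  using assms
  by (auto simp: prob_vector_def vadd_def vscale_def sum.distrib sum_distrib_left[symmetric])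

lemma entropy_mixture_le:
  assumes p: "prob_vector n p" and q: "prob_vector n q" and t: "t \<in> {0..1}"
  shows "entropy n (vadd (vscale t p) (vscale (1 - t) q))
    \<le> t * entropy n p + (1 - t) * entropy n q + 1"
proof -
  have "entropy n (vadd (vscale t p) (vscale (1 - t) q))
      \<le> (\<Sum>i<n. t * eta (p i) + p i * eta t + ((1 - t) * eta (q i) + q i * eta (1 - t)))"
    unfolding entropy_def vadd_def vscale_def
  proof (rule sum_mono)
    fix i
    have "0 \<le> p i" and "0 \<le> q i"
      using p q by (auto simp: prob_vector_def)
    then show "eta (t * p i + (1 - t) * q i)
        \<le> t * eta (p i) + p i * eta t + ((1 - t) * eta (q i) + q i * eta (1 - t))"
      using eta_subadditive[of "t * p i" "(1 - t) * q i"] t by (simp add: eta_mult)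
  qed
  also have "\<dots> = t * entropy n p + (\<Sum>i<n. p i) * eta t
      + ((1 - t) * entropy n q + (\<Sum>i<n. q i) * eta (1 - t))"
    unfolding entropy_def by (simp only: sum.distrib sum_distrib_left sum_distrib_right)
  also have "\<dots> = t * entropy n p + (1 - t) * entropy n q + (eta t + eta (1 - t))"
    using p q by (simp add: prob_vector_def)
  also have "\<dots> \<le> t * entropy n p + (1 - t) * entropy n q + 1"
    using eta_le[of t] eta_le[of "1 - t"] t by simp
  finally show ?thesis .
qed

lemma l1norm_vsub_prob_vector:
  assumes "prob_vector n p" and "prob_vector n q"
  shows "l1norm (vsub p q) = 2 - 2 * (\<Sum>i<n. min (p i) (q i))"
proof -
  have "l1norm (vsub p q) = (\<Sum>i<n. \<bar>p i - q i\<bar>)"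
    using assms l1space_finite_support(2)[of n "vsub p q"] by (simp add: prob_vector_def vsub_def)
  also have "\<dots> = (\<Sum>i<n. p i + q i - 2 * min (p i) (q i))"
    by (intro sum.cong) (auto simp: min_def)
  also have "\<dots> = 2 - 2 * (\<Sum>i<n. min (p i) (q i))"
    using assms by (simp add: prob_vector_def sum.distrib sum_subtractf sum_distrib_left[symmetric])
  finally show ?thesis .
qed

lemma l1norm_vsub_prob_vector_le_2:
  assumes "prob_vector n p" and "prob_vector n q"
  shows "l1norm (vsub p q) \<le> 2"
proof -
  have "0 \<le> (\<Sum>i<n. min (p i) (q i))"
    using assms by (intro sum_nonneg) (auto simp: prob_vector_def)
  with l1norm_vsub_prob_vector[OF assms] show ?thesis
    by linarith
qed

definition unit_seq :: "nat \<Rightarrow> nat \<Rightarrow> real" where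
  "unit_seq k = (\<lambda>i. if i = k then 1 else 0)"

definition uniform_seq :: "nat \<Rightarrow> nat \<Rightarrow> real" where
  "uniform_seq n = (\<lambda>i. if i < n then 1 / n else 0)"

lemma prob_vector_unit_seq: "prob_vector (Suc k) (unit_seq k)"
  by (simp add: prob_vector_def unit_seq_def)

lemma entropy_unit_seq: "entropy n (unit_seq k) = 0"
proof -
  have "eta (unit_seq k i) = 0" for i
    by (simp add: unit_seq_def)
  then show ?thesis
    by (simp add: entropy_def)
qed

lemma prob_vector_uniform_seq: "0 < n \<Longrightarrow> prob_vector n (uniform_seq n)"
  by (simp add: prob_vector_def uniform_seq_def)

lemma uniform_seq_Suc:
  "uniform_seq (Suc n) = vadd (vscale (n / Suc n) (uniform_seq n)) (vscale (1 - n / Suc n) (unit_seq n))"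
proof -
  have "1 - n / Suc n = 1 / Suc n"
    by (simp add: divide_simps)
  moreover have "n / Suc n * (1 / n) = 1 / Suc n" if "0 < n"
    using that by simp
  ultimately show ?thesis
    by (auto simp: fun_eq_iff uniform_seq_def unit_seq_def vadd_def vscale_def)
qed

lemma min_le_eta_bound:
  fixes n :: real
  assumes "0 \<le> x" and "x \<le> 1" and "0 \<le> v" and "v \<le> 1 / n" and "0 < L" and "0 < n"
  shows "min v x \<le> eta x / L + x * exp L / n"
proof (cases "x \<le> exp (- L)")
  case True
  then have "x \<le> eta x / L"
    using eta_ge_if_le_exp[of x L] assms by (simp add: field_simps)
  moreover have "0 \<le> x * exp L / n"
    using assms by simp
  ultimately show ?thesis
    by linarith
next
  case False
  then have "exp (- L) * exp L < x * exp L"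
    by (intro mult_strict_right_mono) auto
  then have "1 < x * exp L"
    by (simp add: exp_minus_inverse mult.commute)
  then have "1 / n \<le> x * exp L / n"
    using assms by (simp add: divide_right_mono)
  moreover have "0 \<le> eta x / L"
    using eta_nonneg assms by simp
  ultimately show ?thesis
    using assms by linarith
qed

text \<open>Coordinates with \<open>p i \<le> exp (- L)\<close> contribute at most \<open>eta (p i) / L\<close> to the overlap
  \<open>\<Sum>i. min (uniform_seq n i) (p i)\<close>; there are fewer than \<open>exp L\<close> other coordinates, and each
  contributes at most \<open>1 / n\<close>.\<close>
lemma l1norm_vsub_uniform_seq_ge:
  assumes p: "prob_vector m p" and "entropy m p \<le> K" and "0 < n" and "0 < L"
  shows "2 - 2 * (K / L + exp L / n) \<le> l1norm (vsub (uniform_seq n) p)"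
proof -
  define k where "k = max n m"
  have "m \<le> k" and "n \<le> k"
    by (simp_all add: k_def)
  note pk = prob_vector_mono[OF p \<open>m \<le> k\<close>]
  note uk = prob_vector_mono(1)[OF prob_vector_uniform_seq[OF \<open>0 < n\<close>] \<open>n \<le> k\<close>]
  have "(\<Sum>i<k. min (uniform_seq n i) (p i)) \<le> (\<Sum>i<k. eta (p i) / L + p i * exp L / n)"
  proof (rule sum_mono)
    fix i
    have "0 \<le> p i" and "p i \<le> 1"
      using pk(1) prob_vector_le_1 by (auto simp: prob_vector_def)
    moreover have "0 \<le> uniform_seq n i" and "uniform_seq n i \<le> 1 / n"
      by (simp_all add: uniform_seq_def)
    ultimately show "min (uniform_seq n i) (p i) \<le> eta (p i) / L + p i * exp L / n"
      using assms by (intro min_le_eta_bound) auto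
  qed
  also have "\<dots> = entropy k p / L + (\<Sum>i<k. p i) * exp L / n"
    unfolding entropy_def by (simp only: sum.distrib sum_divide_distrib sum_distrib_right)
  also have "\<dots> = entropy m p / L + exp L / n"
    using pk by (simp add: prob_vector_def)
  also have "\<dots> \<le> K / L + exp L / n"
    using assms by (intro add_right_mono divide_right_mono) auto
  finally have "2 * (\<Sum>i<k. min (uniform_seq n i) (p i)) \<le> 2 * (K / L + exp L / n)"
    by simp
  then show ?thesis
    using l1norm_vsub_prob_vector[OF uk pk(1)] by linarith
qed

lemma uniform_seq_far_from_low_entropy:
  assumes "0 < \<delta>"
  obtains n where "0 < n"
    and "\<And>m p. prob_vector m p \<Longrightarrow> entropy m p \<le> K \<Longrightarrow> 2 - \<delta> \<le> l1norm (vsub (uniform_seq n) p)"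
proof
  define L where "L = 4 * \<bar>K\<bar> / \<delta> + 1"
  define n where "n = Suc (nat \<lceil>4 * exp L / \<delta>\<rceil>)"
  show "0 < n"
    by (simp add: n_def)
  have "0 < L"
    using assms by (simp add: L_def add_nonneg_pos)
  have "\<delta> / 4 * L = \<bar>K\<bar> + \<delta> / 4"
    using assms by (simp add: L_def algebra_simps)
  then have "K / L \<le> \<delta> / 4"
    using assms \<open>0 < L\<close> abs_ge_self[of K] by (simp add: pos_divide_le_eq)
  have "4 * exp L / \<delta> \<le> n"
    unfolding n_def by linarith
  then have "exp L \<le> \<delta> / 4 * n"
    using assms by (simp add: pos_divide_le_eq mult.commute)
  then have "exp L / n \<le> \<delta> / 4"
    by (simp add: pos_divide_le_eq n_def)
  with \<open>K / L \<le> \<delta> / 4\<close> have "2 * (K / L + exp L / n) \<le> \<delta>"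
    unfolding distrib_left by linarith
  fix m p
  assume "prob_vector m p" and "entropy m p \<le> K"
  from l1norm_vsub_uniform_seq_ge[OF this \<open>0 < n\<close> \<open>0 < L\<close>] \<open>2 * (K / L + exp L / n) \<le> \<delta>\<close>
  show "2 - \<delta> \<le> l1norm (vsub (uniform_seq n) p)"
    by linarith
qed

section \<open>Scaled probability vectors of bounded entropy\<close>

definition entropy_body :: "real \<Rightarrow> real \<Rightarrow> (nat \<Rightarrow> real) set" where
  "entropy_body M K = {vscale M p | p. \<exists>n. prob_vector n p \<and> entropy n p \<le> K}"

lemma entropy_body_l1norm:
  assumes "0 \<le> M" and "a \<in> entropy_body M K"
  shows "a \<in> l1space" and "l1norm a = M"
proof -
  obtain n p where "a = vscale M p" and "prob_vector n p"
    using assms(2) by (auto simp: entropy_body_def)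
  with assms(1) show "a \<in> l1space" and "l1norm a = M"
    by (simp_all add: prob_vector_l1 l1space_vscale l1norm_vscale)
qed

lemma entropy_body_subset_ball: "0 \<le> M \<Longrightarrow> entropy_body M K \<subseteq> ball_N l1norm M"
  using entropy_body_l1norm by (fastforce simp: ball_N_def)

lemma unit_seq_in_entropy_body:
  assumes "0 \<le> K"
  shows "vscale M (unit_seq k) \<in> entropy_body M K"
proof -
  have "prob_vector (Suc k) (unit_seq k) \<and> entropy (Suc k) (unit_seq k) \<le> K"
    using assms by (simp add: prob_vector_unit_seq entropy_unit_seq)
  then show ?thesis
    unfolding entropy_body_def by auto
qed

lemma entropy_body_mixture:
  assumes "x \<in> entropy_body M K" and "y \<in> entropy_body M K" and t: "t \<in> {0..1}"
  obtains n r where "prob_vector n r" and "entropy n r \<le> K + 1"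
    and "vadd (vscale t x) (vscale (1 - t) y) = vscale M r"
proof -
  obtain p q n m where x: "x = vscale M p" and y: "y = vscale M q"
    and p: "prob_vector n p" "entropy n p \<le> K" and q: "prob_vector m q" "entropy m q \<le> K"
    using assms(1,2) by (auto simp: entropy_body_def)
  define k where "k = max n m"
  have "n \<le> k" and "m \<le> k"
    by (simp_all add: k_def)
  note pk = prob_vector_mono[OF p(1) \<open>n \<le> k\<close>] and qk = prob_vector_mono[OF q(1) \<open>m \<le> k\<close>]
  define r where "r = vadd (vscale t p) (vscale (1 - t) q)"
  have "entropy k r \<le> t * entropy k p + (1 - t) * entropy k q + 1"
    using entropy_mixture_le[OF pk(1) qk(1) t] by (simp add: r_def)
  also have "\<dots> \<le> t * K + (1 - t) * K + 1"
    using t p q pk qk by (intro add_mono mult_left_mono) auto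
  finally have "entropy k r \<le> K + 1"
    by (simp add: algebra_simps)
  moreover have "prob_vector k r"
    using prob_vector_mixture[OF pk(1) qk(1) t] by (simp add: r_def)
  moreover have "vadd (vscale t x) (vscale (1 - t) y) = vscale M r"
    by (simp add: x y r_def vscale_vadd_vscale)
  ultimately show thesis
    by (intro that)
qed

text \<open>Shrinking \<open>r\<close> towards the first unit vector by the factor \<open>1 - d\<close>, \<open>d = 1 / (2 M + 1)\<close>,
  moves \<open>M r\<close> by at most \<open>2 M d \<le> 1\<close> and brings the entropy down to \<open>(1 - d) (K + 1) + 1 \<le> K\<close>;
  this is where \<open>4 M + 1 \<le> K\<close> is needed.\<close>
lemma dist_set_N_entropy_body_le_1:
  assumes r: "prob_vector n r" and "entropy n r \<le> K + 1" and "0 \<le> M" and "4 * M + 1 \<le> K"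
  shows "dist_set_N l1norm (vscale M r) (entropy_body M K) \<le> 1"
proof -
  define d where "d = 1 / (2 * M + 1)"
  have d: "0 < d" "d \<le> 1" "2 * M * d \<le> 1" "(1 - d) * (K + 1) + 1 \<le> K"
    using assms(3,4) unfolding d_def by (simp_all add: field_simps)
  define k where "k = max (Suc 0) n"
  have "Suc 0 \<le> k" and "n \<le> k"
    by (simp_all add: k_def)
  note rk = prob_vector_mono[OF r \<open>n \<le> k\<close>]
  note e0 = prob_vector_mono(1)[OF prob_vector_unit_seq[of 0] \<open>Suc 0 \<le> k\<close>]
  define r' where "r' = vadd (vscale (1 - d) r) (vscale (1 - (1 - d)) (unit_seq 0))"
  have "prob_vector k r'"
    using prob_vector_mixture[OF rk(1) e0, of "1 - d"] d by (simp add: r'_def)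
  moreover have "entropy k r' \<le> K"
  proof -
    have "entropy k r' \<le> (1 - d) * entropy k r + 1"
      using entropy_mixture_le[OF rk(1) e0, of "1 - d"] d by (simp add: r'_def entropy_unit_seq)
    also have "\<dots> \<le> (1 - d) * (K + 1) + 1"
      using rk(2) assms(2) d by (intro add_right_mono mult_left_mono) auto
    finally show ?thesis
      using d by linarith
  qed
  ultimately have "vscale M r' \<in> entropy_body M K"
    by (auto simp: entropy_body_def)
  have "vsub (vscale M r) (vscale M r') = vscale (M * d) (vsub r (unit_seq 0))"
    by (simp add: r'_def vsub_def vadd_def vscale_def fun_eq_iff algebra_simps)
  then have "l1norm (vsub (vscale M r) (vscale M r')) = M * d * l1norm (vsub r (unit_seq 0))"
    using prob_vector_l1(1)[OF rk(1)] prob_vector_l1(1)[OF e0] assms d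
    by (simp add: l1norm_vscale l1space_vsub)
  also have "\<dots> \<le> M * d * 2"
    using l1norm_vsub_prob_vector_le_2[OF rk(1) e0] assms d by (intro mult_left_mono) auto
  also have "\<dots> \<le> 1"
    using d by simp
  finally show ?thesis
    using dist_set_N_le[OF \<open>vscale M r' \<in> entropy_body M K\<close>, of l1norm "vscale M r"]
    by (simp add: order_trans)
qed

lemma approx_convex_entropy_body:
  assumes "0 \<le> M" and "4 * M + 1 \<le> K"
  shows "approx_convex_N l1norm (entropy_body M K)"
  unfolding approx_convex_N_def
proof (intro ballI)
  fix x y t
  assume "x \<in> entropy_body M K" and "y \<in> entropy_body M K" and "t \<in> {0..1::real}"
  then obtain n r where "prob_vector n r" and "entropy n r \<le> K + 1"
    and "vadd (vscale t x) (vscale (1 - t) y) = vscale M r"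
    by (rule entropy_body_mixture)
  with assms show "dist_set_N l1norm (vadd (vscale t x) (vscale (1 - t) y)) (entropy_body M K) \<le> 1"
    by (simp add: dist_set_N_entropy_body_le_1)
qed

lemma uniform_seq_in_Co_entropy_body:
  assumes "0 \<le> K" and "0 < n"
  shows "vscale M (uniform_seq n) \<in> Co (entropy_body M K)"
proof -
  have "vscale M (uniform_seq (Suc j)) \<in> Co (entropy_body M K)" for j
  proof (induction j)
    case 0
    have "uniform_seq (Suc 0) = unit_seq 0"
      by (simp add: fun_eq_iff uniform_seq_def unit_seq_def)
    then show ?case
      using unit_seq_in_entropy_body[OF assms(1)] Co_subset by fastforce
  next
    case (Suc j)
    have "vscale M (unit_seq (Suc j)) \<in> Co (entropy_body M K)"
      using unit_seq_in_entropy_body[OF assms(1)] Co_subset by blast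
    moreover have "Suc j / Suc (Suc j) \<in> {0..1::real}"
      by simp
    ultimately show ?case
      using Suc.IH convex_seq_Co[of "entropy_body M K"]
      unfolding convex_seq_def uniform_seq_Suc[of "Suc j"] vscale_vadd_vscale by blast
  qed
  from this[of "n - 1"] assms(2) show ?thesis
    by simp
qed

lemma uniform_seq_far_from_entropy_body:
  assumes "0 < M" and "0 < e"
  obtains n where "0 < n"
    and "ereal (2 * M - e) \<le> dist_set_N l1norm (vscale M (uniform_seq n)) (entropy_body M K)"
proof -
  obtain n where "0 < n" and far:
    "\<And>m p. prob_vector m p \<Longrightarrow> entropy m p \<le> K \<Longrightarrow> 2 - e / M \<le> l1norm (vsub (uniform_seq n) p)"
    using uniform_seq_far_from_low_entropy[of "e / M" K] assms by auto
  have "2 * M - e \<le> l1norm (vsub (vscale M (uniform_seq n)) a)" if a: "a \<in> entropy_body M K" for a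
  proof -
    obtain m p where a_eq: "a = vscale M p" and p: "prob_vector m p" "entropy m p \<le> K"
      using a by (auto simp: entropy_body_def)
    have "M * (2 - e / M) \<le> M * l1norm (vsub (uniform_seq n) p)"
      using far[OF p] assms by (intro mult_left_mono) auto
    moreover have "vsub (uniform_seq n) p \<in> l1space"
      using prob_vector_l1(1)[OF p(1)] prob_vector_l1(1)[OF prob_vector_uniform_seq[OF \<open>0 < n\<close>]]
      by (rule l1space_vsub[rotated])
    ultimately show ?thesis
      using assms by (simp add: a_eq vsub_vscale l1norm_vscale right_diff_distrib)
  qed
  then have "ereal (2 * M - e) \<le> dist_set_N l1norm (vscale M (uniform_seq n)) (entropy_body M K)"
    unfolding dist_set_N_def by (auto intro: INF_greatest)
  with \<open>0 < n\<close> show thesis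
    by (rule that)
qed

lemma SUP_dist_set_N_Co_entropy_body:
  assumes "0 < M" and "0 \<le> K"
  shows "(SUP b\<in>Co (entropy_body M K). dist_set_N l1norm b (entropy_body M K)) = ereal (2 * M)"
    (is "(SUP b\<in>Co ?A. _) = _")
proof (rule antisym)
  show "(SUP b\<in>Co ?A. dist_set_N l1norm b ?A) \<le> ereal (2 * M)"
  proof (rule SUP_least)
    fix b
    assume "b \<in> Co ?A"
    moreover have "Co ?A \<subseteq> ball_N l1norm M"
      using Co_minimal[OF entropy_body_subset_ball convex_seq_ball_N_l1norm] assms by simp
    ultimately have "b \<in> l1space" and "l1norm b \<le> M"
      by (auto simp: ball_N_def)
    have e0: "vscale M (unit_seq 0) \<in> ?A"
      using unit_seq_in_entropy_body assms by blast
    have "l1norm (vsub b (vscale M (unit_seq 0))) \<le> l1norm b + M"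
      using l1norm_vsub_le[OF \<open>b \<in> l1space\<close>] entropy_body_l1norm[OF _ e0] assms by fastforce
    with \<open>l1norm b \<le> M\<close> have "ereal (l1norm (vsub b (vscale M (unit_seq 0)))) \<le> ereal (2 * M)"
      by simp
    with dist_set_N_le[OF e0] show "dist_set_N l1norm b ?A \<le> ereal (2 * M)"
      by (rule order_trans)
  qed
  show "ereal (2 * M) \<le> (SUP b\<in>Co ?A. dist_set_N l1norm b ?A)"
  proof (rule ereal_le_epsilon2)
    fix e :: real
    assume "0 < e"
    from assms(1) this obtain n where "0 < n"
      and far: "ereal (2 * M - e) \<le> dist_set_N l1norm (vscale M (uniform_seq n)) ?A"
      by (rule uniform_seq_far_from_entropy_body)
    note far
    also have "\<dots> \<le> (SUP b\<in>Co ?A. dist_set_N l1norm b ?A)"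
      using uniform_seq_in_Co_entropy_body[OF assms(2) \<open>0 < n\<close>] by (rule SUP_upper)
    finally have "ereal (2 * M - e) + ereal e \<le> (SUP b\<in>Co ?A. dist_set_N l1norm b ?A) + ereal e"
      by (rule add_right_mono)
    then show "ereal (2 * M) \<le> (SUP b\<in>Co ?A. dist_set_N l1norm b ?A) + ereal e"
      by simp
  qed
qed

lemma diam_N_entropy_body:
  assumes "0 \<le> M" and "0 \<le> K"
  shows "diam_N l1norm (entropy_body M K) = ereal (2 * M)"
  unfolding diam_N_def
proof (rule antisym)
  show "(SUP p\<in>entropy_body M K \<times> entropy_body M K. ereal (l1norm (vsub (fst p) (snd p))))
      \<le> ereal (2 * M)"
  proof (rule SUP_least)
    fix p
    assume "p \<in> entropy_body M K \<times> entropy_body M K"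
    with entropy_body_l1norm[OF assms(1)] l1norm_vsub_le[of "fst p" "snd p"]
    show "ereal (l1norm (vsub (fst p) (snd p))) \<le> ereal (2 * M)"
      by (auto simp: mem_Times_iff)
  qed
  have "prob_vector 2 (unit_seq 0)" and "prob_vector 2 (unit_seq 1)"
    using prob_vector_mono(1)[OF prob_vector_unit_seq] by auto
  then have "l1norm (vsub (unit_seq 0) (unit_seq 1)) = 2"
    by (simp add: l1norm_vsub_prob_vector[of 2] unit_seq_def numeral_2_eq_2)
  then have "l1norm (vsub (vscale M (unit_seq 0)) (vscale M (unit_seq 1))) = 2 * M"
    using assms \<open>prob_vector 2 (unit_seq 0)\<close> \<open>prob_vector 2 (unit_seq 1)\<close>
    by (simp add: vsub_vscale l1norm_vscale l1space_vsub prob_vector_l1)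
  with unit_seq_in_entropy_body[OF assms(2)]
  show "ereal (2 * M)
      \<le> (SUP p\<in>entropy_body M K \<times> entropy_body M K. ereal (l1norm (vsub (fst p) (snd p))))"
    by (intro SUP_upper2[of "(vscale M (unit_seq 0), vscale M (unit_seq 1))"]) auto
qed

theorem theorem7p1:
  fixes M :: real
  assumes "M > 0"
  shows "\<exists>N A. equiv_l1_norm N \<and> A \<subseteq> ball_N N M \<and> approx_convex_N N A \<and>
           hausdorff_N N A (Co A) = ereal (2 * M) \<and> diam_N N A = ereal (2 * M)"
proof (intro exI conjI)
  let ?A = "entropy_body M (4 * M + 1)"
  have K: "0 \<le> 4 * M + 1"
    using assms by simp
  note SUP_dist = SUP_dist_set_N_Co_entropy_body[OF assms K]
  show "equiv_l1_norm l1norm"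
    by (rule equiv_l1_norm_l1norm)
  show "?A \<subseteq> ball_N l1norm M"
    using assms by (simp add: entropy_body_subset_ball)
  show "approx_convex_N l1norm ?A"
    using assms by (simp add: approx_convex_entropy_body)
  show "hausdorff_N l1norm ?A (Co ?A) = ereal (2 * M)"
    using assms by (simp add: hausdorff_N_Co_eq l1norm_zero SUP_dist)
  show "diam_N l1norm ?A = ereal (2 * M)"
    using assms K by (simp add: diam_N_entropy_body)
qed

end
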